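(* Let $f:\mathbb{R}^n\times\mathbb{R}^m\to\mathbb{R}$ be twice continuously differentiable, $\mu$-strongly convex in $x$ and $\mu$-strongly concave in $y$ ($\mu>0$), with $\|\nabla F(z)\|\le L$ for all $z$ and $\nabla F$ being $L_2$-Lipschitz, where $F(z)=(\nabla_x f(x,y);-\nabla_y f(x,y))$, $z=(x;y)$. Let $m(z)=\frac12\|F(z)\|^2$. Fix a point $z^k=(x^k;y^k)$, let $g^k=\nabla f(z^k)$, $H^k=\nabla^2 f(z^k)$, and for $\gamma>0$ define $$f_k(x,y;\gamma)=f(z^k)+\langle g^k,z-z^k\rangle+\tfrac12(z-z^k)^\top H^k(z-z^k)+\tfrac{\gamma}{3}\|x-x^k\|^3-\tfrac{\gamma}{3}\|y-y^k\|^3.$$ Let $(\tilde x,\tilde y)$ be the saddle point of $\min_x\max_y f_k(x,y;\gamma)$ and set $u^k=\tilde x-x^k$, $v^k=\tilde y-y^k$, $d^k=(u^k;v^k)$. Then, if $\gamma=\gamma^k>0$ is chosen small enough, $\gamma^k(\|u^k\|+\|v^k\|)<\mu$, and consequently $d^k$ is a descent direction for $m$ at $z^k$: $$\langle\nabla m(z^k),d^k\rangle\le-\frac{\mu^2}{2}\|d^k\|^2.$$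
   Context: $\|\cdot\|$ is the Euclidean norm for vectors and the largest singular value for matrices. The saddle point $(\tilde x,\tilde y)$ is characterized by the first-order conditions $g_x^k+H_{xx}^ku^k+\gamma\|u^k\|u^k+H_{xy}^kv^k=0$ and $g_y^k+H_{yy}^kv^k-\gamma\|v^k\|v^k+(H_{xy}^k)^\top u^k=0$, where $g^k=(g^k_x;g^k_y)$ and $H^k$ has blocks $H^k_{xx},H^k_{xy},H^k_{yy}$. *)

theory Defs
  imports "HOL-Analysis.Analysis"
begin

definition strongly_convex :: "real \<Rightarrow> ('a::real_normed_vector \<Rightarrow> real) \<Rightarrow> bool" where
  "strongly_convex \<mu> g \<longleftrightarrow>
     (\<forall>x1 x2 t. 0 \<le> t \<and> t \<le> 1 \<longrightarrow>
        g ((1 - t) *\<^sub>R x1 + t *\<^sub>R x2)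
          \<le> (1 - t) * g x1 + t * g x2 - \<mu> / 2 * t * (1 - t) * (norm (x1 - x2))\<^sup>2)"

definition opF :: "('a \<times> 'b \<Rightarrow> 'a \<times> 'b) \<Rightarrow> 'a \<times> 'b \<Rightarrow> 'a::real_normed_vector \<times> 'b::real_normed_vector" where
  "opF gf z = (fst (gf z), - snd (gf z))"

definition cubic_model ::
  "(('a::euclidean_space) \<times> ('b::euclidean_space) \<Rightarrow> real) \<Rightarrow> ('a \<times> 'b \<Rightarrow> 'a \<times> 'b)
     \<Rightarrow> ('a \<times> 'b \<Rightarrow> 'a \<times> 'b) \<Rightarrow> 'a \<times> 'b \<Rightarrow> real \<Rightarrow> 'a \<Rightarrow> 'b \<Rightarrow> real" where
  "cubic_model f gf H zk \<gamma> x y =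
     (let d = (x - fst zk, y - snd zk) in
       f zk + inner (gf zk) d + 1/2 * inner d (H d)
       + \<gamma> / 3 * norm (x - fst zk) ^ 3 - \<gamma> / 3 * norm (y - snd zk) ^ 3)"

definition saddle_point :: "('a \<Rightarrow> 'b \<Rightarrow> real) \<Rightarrow> 'a \<Rightarrow> 'b \<Rightarrow> bool" where
  "saddle_point \<phi> xt yt \<longleftrightarrow> (\<forall>x y. \<phi> xt y \<le> \<phi> xt yt \<and> \<phi> xt yt \<le> \<phi> x yt)"

end

theory Submission
  imports Defs
begin

(* Write H for the Hessian and g for the gradient of f at z^k, and d = (u, v) for the saddle step.
   The Hessian is symmetric (its second difference quotients are symmetric in the two directions),
   and strong convexity-concavity gives <H (u,0), (u,0)> >= mu |u|^2 and -<H (0,v), (0,v)> >= mu |v|^2,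
   hence |H d| >= mu |d|.  Comparing the model at (x~, y^k) and (x^k, y~) bounds mu |d| <= 2 |g|, so for
   small gamma the gradient w = (gamma |u| u, -gamma |v| v) of the cubic terms satisfies |w| <= (mu/2) |d|.
   Stationarity of the saddle point reads g + H d + w = 0.  Since |F| = |grad f|, the gradient of m at
   z^k is H g, and <H g, d> = <H d, g> = -|H d|^2 - <H d, w> <= -mu^2 |d|^2 / 2. *)

lemma has_real_derivative_along_line:
  assumes "(G has_derivative G') (at (x + s *\<^sub>R v))"
  shows "((\<lambda>s. G (x + s *\<^sub>R v)) has_real_derivative G' v) (at s)"
proof -
  interpret G': bounded_linear G' using assms by (rule has_derivative_bounded_linear)
  have "((\<lambda>s. x + s *\<^sub>R v) has_derivative (\<lambda>s. s *\<^sub>R v)) (at s)"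
    by (intro derivative_eq_intros) auto
  from has_derivative_compose[OF this assms]
  show ?thesis
    unfolding has_field_derivative_def
    by (rule has_derivative_eq_rhs) (simp add: fun_eq_iff G'.scaleR)
qed

lemma has_real_derivative_imp_right_quotient_tendsto:
  assumes "(p has_real_derivative D) (at 0)"
  shows "((\<lambda>s. (p s - p 0) / s) \<longlongrightarrow> D) (at_right 0)"
  using has_field_derivative_iff[THEN iffD1, OF has_field_derivative_at_within[OF assms]] by simp

lemma strongly_convex_above_tangent:
  fixes G :: "'a::real_normed_vector \<Rightarrow> real"
  assumes sc: "strongly_convex \<mu> G" and G': "(G has_derivative G') (at x)"
  shows "G x + G' (y - x) + \<mu> / 2 * (norm (y - x))\<^sup>2 \<le> G y"
proof -
  define p where "p s = G (x + s *\<^sub>R (y - x))" for s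
  define r where "r s = G y - G x - \<mu> / 2 * (1 - s) * (norm (y - x))\<^sup>2" for s
  have "(p has_real_derivative G' (y - x)) (at 0)"
    unfolding p_def using G' by (intro has_real_derivative_along_line) simp
  then have "((\<lambda>s. (p s - p 0) / s) \<longlongrightarrow> G' (y - x)) (at_right 0)"
    by (rule has_real_derivative_imp_right_quotient_tendsto)
  moreover have "(r \<longlongrightarrow> r 0) (at_right 0)"
    unfolding r_def by (intro tendsto_intros)
  moreover have "\<forall>\<^sub>F s in at_right 0. (p s - p 0) / s \<le> r s"
    unfolding eventually_at_right_field
  proof (intro exI[of _ 1] conjI allI impI)
    fix s :: real assume s: "0 < s" "s < 1"
    have "(1 - s) *\<^sub>R x + s *\<^sub>R y = x + s *\<^sub>R (y - x)" by (simp add: algebra_simps)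
    moreover have "G ((1 - s) *\<^sub>R x + s *\<^sub>R y)
        \<le> (1 - s) * G x + s * G y - \<mu> / 2 * s * (1 - s) * (norm (x - y))\<^sup>2"
      using sc s unfolding strongly_convex_def by simp
    ultimately have "p s \<le> (1 - s) * G x + s * G y - \<mu> / 2 * s * (1 - s) * (norm (x - y))\<^sup>2"
      by (simp add: p_def)
    then have "p s - p 0 \<le> s * r s"
      by (simp add: p_def r_def norm_minus_commute algebra_simps)
    with s show "(p s - p 0) / s \<le> r s" by (simp add: pos_divide_le_eq mult.commute)
  qed simp
  ultimately have "G' (y - x) \<le> r 0"
    using tendsto_le[OF trivial_limit_at_right_real] by blast
  then show ?thesis by (simp add: r_def)
qed

lemma strongly_convex_derivative_monotone:
  fixes G :: "'a::real_normed_vector \<Rightarrow> real"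
  assumes sc: "strongly_convex \<mu> G" and G': "\<And>z. (G has_derivative G' z) (at z)"
  shows "\<mu> * (norm (x - y))\<^sup>2 \<le> G' x (x - y) - G' y (x - y)"
proof -
  interpret Gx: bounded_linear "G' x" using G' by (rule has_derivative_bounded_linear)
  have "G x + G' x (y - x) + \<mu> / 2 * (norm (y - x))\<^sup>2 \<le> G y"
    and "G y + G' y (x - y) + \<mu> / 2 * (norm (x - y))\<^sup>2 \<le> G x"
    by (rule strongly_convex_above_tangent[OF sc G'])+
  moreover have "G' x (y - x) = - G' x (x - y)"
    by (simp add: Gx.diff)
  ultimately show ?thesis by (simp add: norm_minus_commute)
qed

lemma strongly_convex_second_derivative_lower_bound:
  fixes G :: "'a::real_normed_vector \<Rightarrow> real"
  assumes sc: "strongly_convex \<mu> G" and G': "\<And>z. (G has_derivative G' z) (at z)"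
    and G'': "((\<lambda>z. G' z h) has_derivative G'') (at x)"
  shows "\<mu> * (norm h)\<^sup>2 \<le> G'' h"
proof -
  define q where "q s = G' (x + s *\<^sub>R h) h" for s
  have "(q has_real_derivative G'' h) (at 0)"
    unfolding q_def using G'' by (intro has_real_derivative_along_line) simp
  then have lim: "((\<lambda>s. (q s - q 0) / s) \<longlongrightarrow> G'' h) (at_right 0)"
    by (rule has_real_derivative_imp_right_quotient_tendsto)
  have "\<forall>\<^sub>F s in at_right 0. \<mu> * (norm h)\<^sup>2 \<le> (q s - q 0) / s"
    unfolding eventually_at_right_field
  proof (intro exI[of _ 1] conjI allI impI)
    fix s :: real assume s: "0 < s" "s < 1"
    interpret G'0: bounded_linear "G' x" using G' by (rule has_derivative_bounded_linear)
    interpret G's: bounded_linear "G' (x + s *\<^sub>R h)" using G' by (rule has_derivative_bounded_linear)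
    have "\<mu> * (norm (s *\<^sub>R h))\<^sup>2 \<le> G' (x + s *\<^sub>R h) (s *\<^sub>R h) - G' x (s *\<^sub>R h)"
      using strongly_convex_derivative_monotone[OF sc G', of "x + s *\<^sub>R h" x] by simp
    then have "s * (s * (\<mu> * (norm h)\<^sup>2)) \<le> s * (q s - q 0)"
      using s by (simp add: q_def G'0.scaleR G's.scaleR power_mult_distrib power2_eq_square algebra_simps)
    with s show "\<mu> * (norm h)\<^sup>2 \<le> (q s - q 0) / s"
      by (simp add: pos_le_divide_eq mult_le_cancel_left_pos mult.commute)
  qed simp
  then show ?thesis
    by (rule tendsto_le[OF trivial_limit_at_right_real lim tendsto_const])
qed

lemma strongly_convex_fst_hessian_lower_bound:
  fixes f :: "'a::real_inner \<times> 'b::real_inner \<Rightarrow> real"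
  assumes sc: "\<And>y. strongly_convex \<mu> (\<lambda>x. f (x, y))"
    and grad: "\<And>z. (f has_derivative (\<lambda>h. inner (gf z) h)) (at z)"
    and hess: "(gf has_derivative H) (at z)"
  shows "\<mu> * (norm u)\<^sup>2 \<le> inner (H (u, 0)) (u, 0)"
proof -
  have embed: "((\<lambda>x. (x, y)) has_derivative (\<lambda>h. (h, 0))) (at x)" for x :: 'a and y :: 'b
    by (intro derivative_eq_intros) auto
  have "(gf has_derivative H) (at (fst z, snd z))" using hess by simp
  from has_derivative_compose[OF embed this]
  have "((\<lambda>x. inner (gf (x, snd z)) (u, 0)) has_derivative (\<lambda>h. inner (H (h, 0)) (u, 0))) (at (fst z))"
    by (rule has_derivative_inner_left)
  with has_derivative_compose[OF embed grad] show ?thesis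
    by (rule strongly_convex_second_derivative_lower_bound[OF sc, where G' = "\<lambda>x h. inner (gf (x, snd z)) (h, 0)"])
qed

lemma strongly_concave_snd_hessian_upper_bound:
  fixes f :: "'a::real_inner \<times> 'b::real_inner \<Rightarrow> real"
  assumes sc: "\<And>x. strongly_convex \<mu> (\<lambda>y. - f (x, y))"
    and grad: "\<And>z. (f has_derivative (\<lambda>h. inner (gf z) h)) (at z)"
    and hess: "(gf has_derivative H) (at z)"
  shows "\<mu> * (norm v)\<^sup>2 \<le> - inner (H (0, v)) (0, v)"
proof -
  have embed: "((\<lambda>y. (x, y)) has_derivative (\<lambda>h. (0, h))) (at y)" for x :: 'a and y :: 'b
    by (intro derivative_eq_intros) auto
  have "(gf has_derivative H) (at (fst z, snd z))" using hess by simp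
  from has_derivative_compose[OF embed this]
  have "((\<lambda>y. - inner (gf (fst z, y)) (0, v)) has_derivative (\<lambda>h. - inner (H (0, h)) (0, v))) (at (snd z))"
    by (intro has_derivative_minus has_derivative_inner_left)
  with has_derivative_minus[OF has_derivative_compose[OF embed grad]] show ?thesis
    by (rule strongly_convex_second_derivative_lower_bound[OF sc, where G' = "\<lambda>y h. - inner (gf (fst z, y)) (0, h)"])
qed

definition second_difference :: "('a::real_vector \<Rightarrow> real) \<Rightarrow> 'a \<Rightarrow> 'a \<Rightarrow> 'a \<Rightarrow> real \<Rightarrow> real" where
  "second_difference f a h k t = f (a + t *\<^sub>R h + t *\<^sub>R k) - f (a + t *\<^sub>R h) - f (a + t *\<^sub>R k) + f a"

lemma second_difference_commute: "second_difference f a h k t = second_difference f a k h t"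
  by (simp add: second_difference_def algebra_simps)

lemma second_difference_mean_value:
  fixes f :: "'a::real_inner \<Rightarrow> real"
  assumes grad: "\<And>z. (f has_derivative (\<lambda>h. inner (gf z) h)) (at z)" and t: "0 < t"
  obtains \<xi> where "0 < \<xi>" "\<xi> < t"
    and "second_difference f a h k t = t * inner (gf (a + t *\<^sub>R k + \<xi> *\<^sub>R h) - gf (a + \<xi> *\<^sub>R h)) h"
proof -
  define \<phi> where "\<phi> s = f (a + t *\<^sub>R k + s *\<^sub>R h) - f (a + s *\<^sub>R h)" for s
  define \<phi>' where "\<phi>' s = inner (gf (a + t *\<^sub>R k + s *\<^sub>R h) - gf (a + s *\<^sub>R h)) h" for s
  have "(\<phi> has_real_derivative \<phi>' s) (at s)" for s
    unfolding \<phi>_def \<phi>'_def inner_diff_left by (intro DERIV_diff has_real_derivative_along_line grad)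
  then obtain \<xi> where "0 < \<xi>" "\<xi> < t" and "\<phi> t - \<phi> 0 = (t - 0) * \<phi>' \<xi>"
    using MVT2[OF t, of \<phi> \<phi>'] by blast
  with that show ?thesis by (simp add: \<phi>_def \<phi>'_def second_difference_def algebra_simps)
qed

lemma second_difference_estimate:
  fixes f :: "'a::real_inner \<Rightarrow> real"
  assumes grad: "\<And>z. (f has_derivative (\<lambda>h. inner (gf z) h)) (at z)"
    and H: "bounded_linear H" and t: "0 < t" and e: "0 \<le> e"
    and remainder: "\<And>y. norm (y - a) \<le> t * (norm h + norm k) \<Longrightarrow>
                      norm (gf y - gf a - H (y - a)) \<le> e * norm (y - a)"
  shows "\<bar>second_difference f a h k t / t\<^sup>2 - inner (H k) h\<bar> \<le> 2 * e * (norm h + norm k) * norm h"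
proof -
  interpret H: bounded_linear H by (rule H)
  obtain \<xi> where \<xi>: "0 < \<xi>" "\<xi> < t"
    and mv: "second_difference f a h k t = t * inner (gf (a + t *\<^sub>R k + \<xi> *\<^sub>R h) - gf (a + \<xi> *\<^sub>R h)) h"
    using second_difference_mean_value[OF grad t] by blast
  define y1 where "y1 = a + t *\<^sub>R k + \<xi> *\<^sub>R h"
  define y2 where "y2 = a + \<xi> *\<^sub>R h"
  have "0 \<le> t * norm k" "\<xi> * norm h \<le> t * norm h"
    using t \<xi> by (simp_all add: mult_right_mono)
  moreover have "norm (y1 - a) \<le> t * norm k + \<xi> * norm h" "norm (y2 - a) = \<xi> * norm h"
    using \<xi> t norm_triangle_ineq[of "t *\<^sub>R k" "\<xi> *\<^sub>R h"] by (simp_all add: y1_def y2_def)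
  ultimately have y12: "norm (y1 - a) \<le> t * (norm h + norm k)" "norm (y2 - a) \<le> t * (norm h + norm k)"
    by (simp_all add: distrib_left)
  have near: "norm (gf y - gf a - H (y - a)) \<le> e * (t * (norm h + norm k))"
    if "norm (y - a) \<le> t * (norm h + norm k)" for y
    using remainder[OF that] mult_left_mono[OF that e] by (rule order_trans)
  have "gf y1 - gf y2 - t *\<^sub>R H k = (gf y1 - gf a - H (y1 - a)) - (gf y2 - gf a - H (y2 - a))"
    by (simp add: y1_def y2_def H.add H.scaleR algebra_simps)
  then have "norm (gf y1 - gf y2 - t *\<^sub>R H k)
      \<le> norm (gf y1 - gf a - H (y1 - a)) + norm (gf y2 - gf a - H (y2 - a))"
    by (simp only: norm_triangle_ineq4)
  also have "\<dots> \<le> 2 * (e * (t * (norm h + norm k)))"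
    using near[OF y12(1)] near[OF y12(2)] by simp
  finally have "\<bar>inner (gf y1 - gf y2 - t *\<^sub>R H k) h\<bar> \<le> 2 * (e * (t * (norm h + norm k))) * norm h"
    by (rule order_trans[OF Cauchy_Schwarz_ineq2 mult_right_mono[OF _ norm_ge_zero]])
  also have "\<dots> = t * (2 * e * (norm h + norm k) * norm h)" by (simp add: algebra_simps)
  also have "inner (gf y1 - gf y2 - t *\<^sub>R H k) h = t * (second_difference f a h k t / t\<^sup>2 - inner (H k) h)"
    using t unfolding mv y1_def y2_def
    by (simp add: inner_diff_left inner_add_left power2_eq_square field_simps)
  finally show ?thesis
    using t by (simp add: abs_mult)
qed

lemma second_difference_quotient_tendsto:
  fixes f :: "'a::real_inner \<Rightarrow> real"
  assumes grad: "\<And>z. (f has_derivative (\<lambda>h. inner (gf z) h)) (at z)"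
    and hess: "(gf has_derivative H) (at a)"
  shows "((\<lambda>t. second_difference f a h k t / t\<^sup>2) \<longlongrightarrow> inner (H k) h) (at_right 0)"
proof (rule tendstoI)
  fix \<epsilon> :: real assume "0 < \<epsilon>"
  define C where "C = 2 * (norm h + norm k) * norm h"
  define e where "e = \<epsilon> / (C + 1)"
  have "C \<ge> 0" by (simp add: C_def)
  then have e: "0 < e" "e * C < \<epsilon>"
    using \<open>0 < \<epsilon>\<close> by (simp_all add: e_def field_simps)
  obtain d where "0 < d"
    and remainder: "\<And>y. norm (y - a) < d \<Longrightarrow> norm (gf y - gf a - H (y - a)) \<le> e * norm (y - a)"
    using hess e(1) unfolding has_derivative_at_alt by blast
  have "0 < norm h + norm k + 1" by (simp add: add_nonneg_pos)
  show "\<forall>\<^sub>F t in at_right 0. dist (second_difference f a h k t / t\<^sup>2) (inner (H k) h) < \<epsilon>"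
    unfolding eventually_at_right_field
  proof (intro exI[of _ "d / (norm h + norm k + 1)"] conjI allI impI)
    show "0 < d / (norm h + norm k + 1)"
      using \<open>0 < d\<close> \<open>0 < norm h + norm k + 1\<close> by simp
    fix t :: real assume t: "0 < t" "t < d / (norm h + norm k + 1)"
    then have "t * (norm h + norm k + 1) < d"
      using \<open>0 < norm h + norm k + 1\<close> by (simp add: pos_less_divide_eq)
    then have "t * (norm h + norm k) < d" using t(1) by (simp add: distrib_left)
    have "\<bar>second_difference f a h k t / t\<^sup>2 - inner (H k) h\<bar> \<le> 2 * e * (norm h + norm k) * norm h"
    proof (rule second_difference_estimate[OF grad has_derivative_bounded_linear[OF hess] t(1) less_imp_le[OF e(1)]])
      fix y assume "norm (y - a) \<le> t * (norm h + norm k)"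
      with \<open>t * (norm h + norm k) < d\<close> show "norm (gf y - gf a - H (y - a)) \<le> e * norm (y - a)"
        by (intro remainder) simp
    qed
    also have "\<dots> = e * C" by (simp add: C_def)
    finally show "dist (second_difference f a h k t / t\<^sup>2) (inner (H k) h) < \<epsilon>"
      using e by (simp add: dist_real_def)
  qed
qed

lemma hessian_symmetric:
  fixes f :: "'a::real_inner \<Rightarrow> real"
  assumes grad: "\<And>z. (f has_derivative (\<lambda>h. inner (gf z) h)) (at z)"
    and hess: "(gf has_derivative H) (at a)"
  shows "inner (H k) h = inner (H h) k"
  using tendsto_unique[OF trivial_limit_at_right_real
      second_difference_quotient_tendsto[OF grad hess, of h k]
      second_difference_quotient_tendsto[OF grad hess, of k h,
        unfolded second_difference_commute[of f a k h]]] .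

lemma convex_concave_hessian_norm_lower_bound:
  fixes H :: "'a::real_inner \<times> 'b::real_inner \<Rightarrow> 'a \<times> 'b"
  assumes H: "bounded_linear H" and sym: "\<And>p q. inner (H p) q = inner (H q) p"
    and convex_x: "\<And>u. \<mu> * (norm u)\<^sup>2 \<le> inner (H (u, 0)) (u, 0)"
    and concave_y: "\<And>v. \<mu> * (norm v)\<^sup>2 \<le> - inner (H (0, v)) (0, v)"
  shows "\<mu> * norm (u, v) \<le> norm (H (u, v))"
proof -
  interpret H: bounded_linear H by (rule H)
  have "H (u, v) = H (u, 0) + H (0, v)" by (simp flip: H.add)
  moreover have "(u, - v) = (u, 0) - (0, v)" by simp
  ultimately have "inner (H (u, v)) (u, - v) = inner (H (u, 0)) (u, 0) - inner (H (0, v)) (0, v)"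
    using sym[of "(u, 0)" "(0, v)"] by (simp only: inner_add_left inner_diff_right)
  then have "\<mu> * (norm (u, v))\<^sup>2 \<le> inner (H (u, v)) (u, - v)"
    using convex_x[of u] concave_y[of v] by (simp add: norm_Pair distrib_left)
  also have "\<dots> \<le> norm (H (u, v)) * norm (u, v)"
    using norm_cauchy_schwarz[of "H (u, v)" "(u, - v)"] by (simp add: norm_Pair)
  finally have "norm (u, v) * (\<mu> * norm (u, v)) \<le> norm (u, v) * norm (H (u, v))"
    by (simp add: power2_eq_square algebra_simps)
  then show ?thesis
    by (cases "norm (u, v) = 0") (simp_all add: mult_le_cancel_left_pos)
qed

lemma half_sq_norm_opF_has_derivative:
  fixes gf :: "'a::real_inner \<times> 'b::real_inner \<Rightarrow> 'a \<times> 'b"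
  assumes hess: "(gf has_derivative H) (at z)" and sym: "\<And>p q. inner (H p) q = inner (H q) p"
  shows "((\<lambda>z. 1/2 * (norm (opF gf z))\<^sup>2) has_derivative (\<lambda>h. inner (H (gf z)) h)) (at z)"
proof -
  have "norm (opF gf z) = norm (gf z)" for z
    by (simp add: opF_def norm_prod_def)
  then have "1/2 * (norm (opF gf z))\<^sup>2 = 1/2 * inner (gf z) (gf z)" for z
    by (simp add: power2_norm_eq_inner)
  moreover have "((\<lambda>z. 1/2 * inner (gf z) (gf z)) has_derivative
      (\<lambda>h. 1/2 * (inner (gf z) (H h) + inner (H h) (gf z)))) (at z)"
    by (intro has_derivative_mult_right has_derivative_inner hess)
  ultimately show ?thesis
    by (simp add: sym[of _ "gf z"] inner_commute)
qed

lemma has_derivative_norm_cube: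
  fixes x :: "'a::real_inner"
  shows "((\<lambda>x. norm x ^ 3) has_derivative (\<lambda>h. 3 * norm x * inner x h)) (at x)"
proof (cases "x = 0")
  case False
  have "((\<lambda>y. norm y * inner y y) has_derivative
      (\<lambda>h. norm x * (inner x h + inner h x) + inner (sgn x) h * inner x x)) (at x)"
    using has_derivative_norm[OF False]
    by (intro has_derivative_mult has_derivative_inner has_derivative_ident) (simp add: inner_commute)
  moreover have "norm y * inner y y = norm y ^ 3" for y :: 'a
    by (simp add: power2_norm_eq_inner[symmetric] power3_eq_cube power2_eq_square)
  ultimately show ?thesis
    using False
    by (simp add: sgn_div_norm inner_commute power2_norm_eq_inner[symmetric] power2_eq_square field_simps)
next
  case True
  have "((\<lambda>h::'a. norm h ^ 2) \<longlongrightarrow> 0) (at 0)"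
    by (intro tendsto_eq_intros) auto
  then have "((\<lambda>h::'a. norm (norm (0 + h) ^ 3 - norm 0 ^ 3 - 0) / norm h) \<longlongrightarrow> 0) (at 0)"
    by (rule Lim_transform_eventually)
      (simp add: always_eventually power2_eq_square power3_eq_cube)
  with True show ?thesis by (simp add: has_derivative_at)
qed

lemma saddle_point_has_derivative_zero:
  fixes \<phi> :: "'a::real_normed_vector \<Rightarrow> 'b::real_normed_vector \<Rightarrow> real"
  assumes sp: "saddle_point \<phi> x y"
    and D: "((\<lambda>z. \<phi> (fst z) (snd z)) has_derivative D) (at (x, y))"
  shows "D = (\<lambda>_. 0)"
proof -
  interpret D: bounded_linear D using D by (rule has_derivative_bounded_linear)
  have "((\<lambda>x'. (x', y)) has_derivative (\<lambda>h. (h, 0))) (at x)"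
    by (intro derivative_eq_intros) auto
  from has_derivative_compose[OF this D]
  have Dx: "(\<lambda>h. D (h, 0)) = (\<lambda>_. 0)"
    by (rule has_derivative_local_min) (use sp in \<open>simp add: saddle_point_def\<close>)
  have "((\<lambda>y'. (x, y')) has_derivative (\<lambda>h. (0, h))) (at y)"
    by (intro derivative_eq_intros) auto
  from has_derivative_compose[OF this D]
  have Dy: "(\<lambda>h. D (0, h)) = (\<lambda>_. 0)"
    by (rule has_derivative_local_max) (use sp in \<open>simp add: saddle_point_def\<close>)
  show ?thesis
  proof
    fix z :: "'a \<times> 'b"
    have "D z = D (fst z, 0) + D (0, snd z)"
      by (simp flip: D.add)
    with Dx Dy show "D z = 0" by (metis add_0)
  qed
qed

lemma cubic_model_has_derivative:
  fixes H :: "'a::euclidean_space \<times> 'b::euclidean_space \<Rightarrow> 'a \<times> 'b"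
  assumes H: "bounded_linear H" and sym: "\<And>p q. inner (H p) q = inner (H q) p"
  shows "((\<lambda>z. cubic_model f gf H zk \<gamma> (fst z) (snd z)) has_derivative
           (\<lambda>h. inner (gf zk + H (u, v) + ((\<gamma> * norm u) *\<^sub>R u, - (\<gamma> * norm v) *\<^sub>R v)) h))
         (at (fst zk + u, snd zk + v))"
proof -
  interpret H: bounded_linear H by (rule H)
  let ?z = "(fst zk + u, snd zk + v)"
  have model: "cubic_model f gf H zk \<gamma> (fst z) (snd z) =
      f zk + inner (gf zk) (z - zk) + 1/2 * inner (z - zk) (H (z - zk))
      + \<gamma> / 3 * norm (fst z - fst zk) ^ 3 - \<gamma> / 3 * norm (snd z - snd zk) ^ 3" for z
  proof -
    have "(fst z - fst zk, snd z - snd zk) = z - zk" by (simp add: prod_eq_iff)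
    then show ?thesis unfolding cubic_model_def Let_def by simp
  qed
  have shift: "((\<lambda>z. z - zk) has_derivative (\<lambda>h. h)) (at ?z)"
    by (intro derivative_eq_intros) auto
  have cube_fst: "((\<lambda>z. norm (fst z - fst zk) ^ 3) has_derivative (\<lambda>h. 3 * norm u * inner u (fst h))) (at ?z)"
    using has_derivative_compose[OF has_derivative_fst[OF shift] has_derivative_norm_cube[of "fst (?z - zk)"]] by simp
  have cube_snd: "((\<lambda>z. norm (snd z - snd zk) ^ 3) has_derivative (\<lambda>h. 3 * norm v * inner v (snd h))) (at ?z)"
    using has_derivative_compose[OF has_derivative_snd[OF shift] has_derivative_norm_cube[of "snd (?z - zk)"]] by simp
  have deriv: "((\<lambda>z. cubic_model f gf H zk \<gamma> (fst z) (snd z)) has_derivative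
      (\<lambda>h. 0 + inner (gf zk) h + 1/2 * (inner (?z - zk) (H h) + inner h (H (?z - zk)))
        + \<gamma> / 3 * (3 * norm u * inner u (fst h)) - \<gamma> / 3 * (3 * norm v * inner v (snd h)))) (at ?z)"
    unfolding model
    by (intro has_derivative_diff has_derivative_add has_derivative_const has_derivative_mult_right
        has_derivative_inner_right has_derivative_inner H.has_derivative shift cube_fst cube_snd)
  have "?z - zk = (u, v)" by (simp add: prod_eq_iff)
  then have sym_uv: "inner (?z - zk) (H h) = inner (H (u, v)) h" "inner h (H (?z - zk)) = inner (H (u, v)) h" for h
    using sym[of h "(u, v)"] by (simp_all add: inner_commute)
  have regularizer: "inner ((\<gamma> * norm u) *\<^sub>R u, - (\<gamma> * norm v) *\<^sub>R v) h
      = \<gamma> * norm u * inner u (fst h) - \<gamma> * norm v * inner v (snd h)" for h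
    by (cases h) simp
  from deriv show ?thesis
    by (rule has_derivative_eq_rhs) (simp add: sym_uv regularizer fun_eq_iff inner_add_left)
qed

lemma cubic_model_saddle_point_stationary:
  fixes H :: "'a::euclidean_space \<times> 'b::euclidean_space \<Rightarrow> 'a \<times> 'b"
  assumes H: "bounded_linear H" and sym: "\<And>p q. inner (H p) q = inner (H q) p"
    and sp: "saddle_point (cubic_model f gf H zk \<gamma>) (fst zk + u) (snd zk + v)"
  shows "gf zk + H (u, v) + ((\<gamma> * norm u) *\<^sub>R u, - (\<gamma> * norm v) *\<^sub>R v) = 0"
proof -
  let ?w = "gf zk + H (u, v) + ((\<gamma> * norm u) *\<^sub>R u, - (\<gamma> * norm v) *\<^sub>R v)"
  have "(\<lambda>h. inner ?w h) = (\<lambda>_. 0)"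
    by (rule saddle_point_has_derivative_zero[OF sp cubic_model_has_derivative[OF H sym]])
  then have "inner ?w ?w = 0" by metis
  then show ?thesis by simp
qed

lemma cubic_model_saddle_point_norm_bound:
  fixes H :: "'a::euclidean_space \<times> 'b::euclidean_space \<Rightarrow> 'a \<times> 'b"
  assumes \<gamma>: "0 \<le> \<gamma>"
    and convex_x: "\<And>u. \<mu> * (norm u)\<^sup>2 \<le> inner (H (u, 0)) (u, 0)"
    and concave_y: "\<And>v. \<mu> * (norm v)\<^sup>2 \<le> - inner (H (0, v)) (0, v)"
    and sp: "saddle_point (cubic_model f gf H zk \<gamma>) (fst zk + u) (snd zk + v)"
  shows "\<mu> * norm (u, v) \<le> 2 * norm (gf zk)"
proof -
  have "cubic_model f gf H zk \<gamma> (fst zk + u) (snd zk) \<le> cubic_model f gf H zk \<gamma> (fst zk) (snd zk + v)"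
    using sp order_trans unfolding saddle_point_def by blast
  then have "inner (gf zk) (u, 0) + 1/2 * inner (H (u, 0)) (u, 0) + \<gamma> / 3 * norm u ^ 3
      \<le> inner (gf zk) (0, v) + 1/2 * inner (H (0, v)) (0, v) - \<gamma> / 3 * norm v ^ 3"
    unfolding cubic_model_def Let_def by (simp add: inner_commute)
  moreover have "0 \<le> \<gamma> / 3 * norm u ^ 3" "0 \<le> \<gamma> / 3 * norm v ^ 3"
    using \<gamma> by simp_all
  moreover have "inner (gf zk) (- u, v) = inner (gf zk) (0, v) - inner (gf zk) (u, 0)"
    by (simp add: inner_prod_def)
  moreover have "(norm (u, v))\<^sup>2 = (norm u)\<^sup>2 + (norm v)\<^sup>2"
    by (simp add: norm_Pair)
  ultimately have "\<mu> / 2 * (norm (u, v))\<^sup>2 \<le> inner (gf zk) (- u, v)"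
    using convex_x[of u] concave_y[of v] by (simp add: algebra_simps)
  also have "\<dots> \<le> norm (gf zk) * norm (u, v)"
    using norm_cauchy_schwarz[of "gf zk" "(- u, v)"] by (simp add: norm_Pair)
  finally have "norm (u, v) * (\<mu> * norm (u, v)) \<le> norm (u, v) * (2 * norm (gf zk))"
    by (simp add: power2_eq_square algebra_simps)
  then show ?thesis
    by (cases "norm (u, v) = 0") (simp_all add: mult_le_cancel_left_pos)
qed

lemma cubic_model_saddle_point_step_bound:
  fixes H :: "'a::euclidean_space \<times> 'b::euclidean_space \<Rightarrow> 'a \<times> 'b"
  assumes \<mu>: "0 < \<mu>" and \<gamma>: "0 \<le> \<gamma>" "\<gamma> \<le> \<mu>\<^sup>2 / (8 * norm (gf zk) + 1)"
    and convex_x: "\<And>u. \<mu> * (norm u)\<^sup>2 \<le> inner (H (u, 0)) (u, 0)"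
    and concave_y: "\<And>v. \<mu> * (norm v)\<^sup>2 \<le> - inner (H (0, v)) (0, v)"
    and sp: "saddle_point (cubic_model f gf H zk \<gamma>) (fst zk + u) (snd zk + v)"
  shows "\<gamma> * (norm u + norm v) \<le> \<mu> / 2"
proof -
  let ?g = "norm (gf zk)"
  have "\<mu> * (norm u + norm v) \<le> 2 * (\<mu> * norm (u, v))"
    using \<mu> norm_fst_le[of u v] norm_snd_le[of v u] by simp
  also have "\<dots> \<le> 4 * ?g"
    using cubic_model_saddle_point_norm_bound[OF \<gamma>(1) convex_x concave_y sp] by simp
  finally have "\<gamma> * (\<mu> * (norm u + norm v)) \<le> \<mu>\<^sup>2 / (8 * ?g + 1) * (4 * ?g)"
    using \<gamma> \<mu> by (intro mult_mono[of \<gamma>]) simp_all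
  also have "\<dots> = \<mu>\<^sup>2 * (4 * ?g / (8 * ?g + 1))"
    by simp
  also have "\<dots> \<le> \<mu>\<^sup>2 * (1 / 2)"
    using pos_divide_le_eq[of "8 * ?g + 1"] by (intro mult_left_mono) (simp_all add: add_nonneg_pos)
  also have "\<dots> = \<mu> * (\<mu> / 2)"
    by (simp add: power2_eq_square)
  finally have "\<mu> * (\<gamma> * (norm u + norm v)) \<le> \<mu> * (\<mu> / 2)"
    by (simp only: mult.left_commute[of \<mu> \<gamma>])
  then show ?thesis
    using mult_le_cancel_left_pos[OF \<mu>] by blast
qed

lemma norm_cubic_regularizer_gradient_le:
  assumes "0 \<le> \<gamma>"
  shows "norm ((\<gamma> * norm u) *\<^sub>R u, - (\<gamma> * norm v) *\<^sub>R v) \<le> \<gamma> * (norm u + norm v) * norm (u, v)"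
proof -
  have "norm ((\<gamma> * norm u) *\<^sub>R u, - (\<gamma> * norm v) *\<^sub>R v) \<le> \<gamma> * norm u * norm u + \<gamma> * norm v * norm v"
    using norm_Pair_le[of "(\<gamma> * norm u) *\<^sub>R u" "- (\<gamma> * norm v) *\<^sub>R v"] assms by simp
  also have "\<dots> \<le> \<gamma> * norm u * norm (u, v) + \<gamma> * norm v * norm (u, v)"
    using assms norm_fst_le[of u v] norm_snd_le[of v u]
    by (intro add_mono mult_left_mono) simp_all
  finally show ?thesis by (simp add: algebra_simps)
qed

lemma inner_opposite_perturbed_le:
  fixes g p w :: "'a::real_inner"
  assumes "g + p + w = 0" and "norm w \<le> b" and "b \<le> m / 2" and "m \<le> norm p"
  shows "inner p g \<le> - m\<^sup>2 / 2"
proof -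
  have "0 \<le> m" using assms(2-4) norm_ge_zero[of w] by linarith
  have "inner p g = inner p (g + p + w) - inner p p - inner p w"
    by (simp add: inner_add_right)
  also have "\<dots> = - (norm p)\<^sup>2 - inner p w"
    using assms(1) by (simp add: power2_norm_eq_inner)
  also have "\<dots> \<le> - (norm p)\<^sup>2 + norm p * norm w"
    using norm_cauchy_schwarz[of p "- w"] by simp
  also have "\<dots> \<le> - (norm p)\<^sup>2 + norm p * (m / 2)"
    using assms(2,3) by (intro add_left_mono mult_left_mono) simp_all
  also have "\<dots> = - m\<^sup>2 / 2 - (norm p - m) * (norm p + m / 2)"
    by (simp add: power2_eq_square field_simps)
  also have "\<dots> \<le> - m\<^sup>2 / 2"
    using assms(4) \<open>0 \<le> m\<close> by simp
  finally show ?thesis .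
qed

lemma cubic_model_saddle_point_descent:
  fixes H :: "'a::euclidean_space \<times> 'b::euclidean_space \<Rightarrow> 'a \<times> 'b"
  assumes H: "bounded_linear H" and sym: "\<And>p q. inner (H p) q = inner (H q) p"
    and convex_x: "\<And>u. \<mu> * (norm u)\<^sup>2 \<le> inner (H (u, 0)) (u, 0)"
    and concave_y: "\<And>v. \<mu> * (norm v)\<^sup>2 \<le> - inner (H (0, v)) (0, v)"
    and \<gamma>: "0 \<le> \<gamma>" "\<gamma> * (norm u + norm v) \<le> \<mu> / 2"
    and sp: "saddle_point (cubic_model f gf H zk \<gamma>) (fst zk + u) (snd zk + v)"
  shows "inner (H (u, v)) (gf zk) \<le> - (\<mu> * norm (u, v))\<^sup>2 / 2"
proof (rule inner_opposite_perturbed_le)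
  show "gf zk + H (u, v) + ((\<gamma> * norm u) *\<^sub>R u, - (\<gamma> * norm v) *\<^sub>R v) = 0"
    by (rule cubic_model_saddle_point_stationary[OF H sym sp])
  show "norm ((\<gamma> * norm u) *\<^sub>R u, - (\<gamma> * norm v) *\<^sub>R v) \<le> \<gamma> * (norm u + norm v) * norm (u, v)"
    by (rule norm_cubic_regularizer_gradient_le[OF \<gamma>(1)])
  show "\<gamma> * (norm u + norm v) * norm (u, v) \<le> \<mu> * norm (u, v) / 2"
    using mult_right_mono[OF \<gamma>(2) norm_ge_zero] by simp
  show "\<mu> * norm (u, v) \<le> norm (H (u, v))"
    by (rule convex_concave_hessian_norm_lower_bound[OF H sym convex_x concave_y])
qed

theorem proposition3p3:
  fixes f :: "(real^'n::finite) \<times> (real^'m::finite) \<Rightarrow> real"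
    and gf :: "(real^'n::finite) \<times> (real^'m::finite) \<Rightarrow> (real^'n) \<times> (real^'m)"
    and Hf :: "(real^'n::finite) \<times> (real^'m::finite) \<Rightarrow> ((real^'n) \<times> (real^'m)) \<Rightarrow>\<^sub>L ((real^'n) \<times> (real^'m))"
    and \<mu> L L2 :: real
    and zk :: "(real^'n::finite) \<times> (real^'m::finite)"
  assumes mu_pos: "\<mu> > 0"
    and grad: "\<And>z. (f has_derivative (\<lambda>h. inner (gf z) h)) (at z)"
    and hess: "\<And>z. (gf has_derivative blinfun_apply (Hf z)) (at z)"
    and hess_cont: "continuous_on UNIV Hf"
    and sconvex_x: "\<And>y. strongly_convex \<mu> (\<lambda>x. f (x, y))"
    and sconcave_y: "\<And>x. strongly_convex \<mu> (\<lambda>y. - f (x, y))"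
    and JF_bound: "\<And>z. onorm (\<lambda>d. (fst (Hf z d), - snd (Hf z d))) \<le> L"
    and JF_lipschitz: "\<And>z z'. onorm (\<lambda>d. (fst (Hf z d), - snd (Hf z d)) - (fst (Hf z' d), - snd (Hf z' d)))
                                \<le> L2 * norm (z - z')"
  shows "\<exists>\<gamma>0 > 0. \<forall>\<gamma>. 0 < \<gamma> \<and> \<gamma> < \<gamma>0 \<longrightarrow>
           (\<forall>u v. saddle_point (cubic_model f gf (blinfun_apply (Hf zk)) zk \<gamma>) (fst zk + u) (snd zk + v) \<longrightarrow>
              \<gamma> * (norm u + norm v) < \<mu> \<and>
              (\<exists>gm. ((\<lambda>z. 1/2 * (norm (opF gf z))\<^sup>2) has_derivative (\<lambda>h. inner gm h)) (at zk) \<and>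
                    inner gm (u, v) \<le> - (\<mu>\<^sup>2 / 2) * (norm (u, v))\<^sup>2))"
proof -
  define H where "H = blinfun_apply (Hf zk)"
  have H: "bounded_linear H" unfolding H_def by (rule blinfun.bounded_linear_right)
  have hess_zk: "(gf has_derivative H) (at zk)" unfolding H_def by (rule hess)
  note sym = hessian_symmetric[OF grad hess_zk]
  note convex_x = strongly_convex_fst_hessian_lower_bound[OF sconvex_x grad hess_zk]
  note concave_y = strongly_concave_snd_hessian_upper_bound[OF sconcave_y grad hess_zk]
  define \<gamma>0 where "\<gamma>0 = \<mu>\<^sup>2 / (8 * norm (gf zk) + 1)"
  show ?thesis
  proof (intro exI[of _ \<gamma>0] conjI allI impI)
    show "0 < \<gamma>0" using mu_pos by (simp add: \<gamma>0_def add_nonneg_pos)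
    fix \<gamma> u v
    assume \<gamma>: "0 < \<gamma> \<and> \<gamma> < \<gamma>0"
      and "saddle_point (cubic_model f gf (blinfun_apply (Hf zk)) zk \<gamma>) (fst zk + u) (snd zk + v)"
    then have sp: "saddle_point (cubic_model f gf H zk \<gamma>) (fst zk + u) (snd zk + v)"
      by (simp add: H_def)
    have small: "\<gamma> * (norm u + norm v) \<le> \<mu> / 2"
      using \<gamma> by (intro cubic_model_saddle_point_step_bound[OF mu_pos _ _ convex_x concave_y sp])
        (simp_all add: \<gamma>0_def)
    with mu_pos show "\<gamma> * (norm u + norm v) < \<mu>" by linarith
    have "inner (H (gf zk)) (u, v) \<le> - (\<mu>\<^sup>2 / 2) * (norm (u, v))\<^sup>2"
      using cubic_model_saddle_point_descent[OF H sym convex_x concave_y _ small sp] \<gamma>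
      by (simp add: sym[of "gf zk"] power_mult_distrib)
    with half_sq_norm_opF_has_derivative[OF hess_zk sym]
    show "\<exists>gm. ((\<lambda>z. 1/2 * (norm (opF gf z))\<^sup>2) has_derivative (\<lambda>h. inner gm h)) (at zk) \<and>
               inner gm (u, v) \<le> - (\<mu>\<^sup>2 / 2) * (norm (u, v))\<^sup>2"
      by blast
  qed
qed

end
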